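(* Let $\hat J$, $\hat\Delta_{\mathbf u,\mathbf v}$, $\hat\phi^+_{\mathbf u}$, $\hat\phi^-_{\mathbf u}$ be as in the context, and let the suboptimal policy be $\hat\mu^*(\mathbf Q)\in\arg\min_{\mathbf u\in\mathcal U}\hat J(\mathbf Q,\mathbf u)$. Then: (1) Let $\mathbf 0\in\mathcal U$ be the all-zero action and $\hat{\mathcal Q}_0=\{\mathbf Q\in\mathcal Q: Q_{n,m}\le\hat\phi^+_{\mathbf 0}(\mathbf Q_{-n,-m})\ \forall n\in\mathcal N,\ m\in\mathcal M_n\}$. For every $\mathbf Q\in\hat{\mathcal Q}_0$, $\hat\Delta_{\mathbf 0,\mathbf v}(\mathbf Q)\le0$ for all $\mathbf v\in\mathcal U$, so $\mathbf 0\in\arg\min_{\mathbf u}\hat J(\mathbf Q,\mathbf u)$. (2) Let $\mathbf u\in\mathcal U$ with $u_n=m\in\mathcal M_n$ for some $n\in\mathcal N$. Then for every $\mathbf Q\in\mathcal Q$ with $Q_{n,m}\ge\hat\phi^-_{\mathbf u}(\mathbf Q_{-n,-m})$ we have $\hat\Delta_{\mathbf u,\mathbf v}(\mathbf Q)\le0$ for all $\mathbf v\in\mathcal U$, so $\mathbf u\in\arg\min_{\mathbf v}\hat J(\mathbf Q,\mathbf v)$. Moreover, if $u_0=m\in\mathcal M_0$, then $\hat\phi^-_{\mathbf u}(\mathbf Q_{-0,-m})$ is monotonically non-increasing in $Q_{n,m}$ for every $n\in\mathcal N_m$.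
   Context: Model. Let $N\ge 1$, $\mathcal N=\{0,1,\dots,N\}$ (base station $0$ is the macro base station, MBS) and $\mathcal N^+=\{1,\dots,N\}$ (small base stations, SBSs). Let $\mathcal M=\{1,\dots,M\}$ be the set of contents. For each $n\in\mathcal N$ let $\mathcal M_n\subseteq\mathcal M$ be the set of contents cached at BS $n$, with $\mathcal M_0=\mathcal M$; put $\tilde{\mathcal M}_n=\mathcal M_n\cup\{0\}$ and $\mathcal N_m=\{n\in\mathcal N^+: m\in\mathcal M_n\}$. Powers $p(n,m)\ge 0$ are given for $n\in\mathcal N$, $m\in\mathcal M_n$, and $p(n,0)=0$. A weight $w\ge 0$ is fixed. The feasible action space is $\mathcal U=\{\mathbf u=(u_n)_{n\in\mathcal N}: u_n\in\tilde{\mathcal M}_n\ \forall n,\ u_0\sum_{n\in\mathcal N^+}u_n=0\}$. A state is $\mathbf Q=(Q_{n,m})_{n\in\mathcal N,m\in\mathcal M_n}$ with $Q_{n,m}\in\mathcal Q_{n,m}=\{0,1,\dots,N_{n,m}\}$ for given positive integers $N_{n,m}$; $\mathcal Q=\prod_{n\in\mathcal N}\prod_{m\in\mathcal M_n}\mathcal Q_{n,m}$. Arrivals $A_{n,m}$ ($n\in\mathcal N$, $m\in\mathcal M$) are mutually independent nonnegative-integer random variables with fixed distributions, i.i.d. across time slots; $\tilde A_{0,m}=A_{0,m}+\sum_{n\in\mathcal N^+\setminus\mathcal N_m}A_{n,m}$. Given state $\mathbf Q$ and action $\mathbf u$, the next state $\mathbf Q'$ is $Q'_{0,m}=\min\{\mathbf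 1(u_0\neq m)Q_{0,m}+\tilde A_{0,m},N_{0,m}\}$ for $m\in\mathcal M_0$ and $Q'_{n,m}=\min\{\mathbf 1(u_0\neq m\text{ and }u_n\neq m)Q_{n,m}+A_{n,m},N_{n,m}\}$ for $n\in\mathcal N^+$, $m\in\mathcal M_n$; $\mathbb E$ denotes expectation over the arrivals. The per-stage cost is $g(\mathbf Q,\mathbf u)=d(\mathbf Q)+w\,p(\mathbf u)$ with $d(\mathbf Q)=\sum_{n\in\mathcal N}\sum_{m\in\mathcal M_n}Q_{n,m}$ and $p(\mathbf u)=\sum_{n\in\mathcal N}p(n,u_n)$. Per-BS-content value functions. Let $\hat\mu$ be a randomized base policy: a fixed probability distribution on $\mathcal U$ from which the action is drawn each slot independently of state and arrivals; $\mathbb E^{\hat\mu}$ is expectation over $\mathbf u\sim\hat\mu$. For $n\in\mathcal N$, $m\in\mathcal M_n$ let $g_{n,m}(Q_{n,m},\mathbf u)=Q_{n,m}+w\mathbf 1(u_n=m)p(n,m)$ and $\Pr[Q'_{n,m}\mid Q_{n,m},\mathbf u]$ the transition probability of the $(n,m)$ component. Fix $Q^\dagger_{n,m}\in\mathcal Q_{n,m}$; define $\hat V^0_{n,m}\equiv0$, $\hat J^{l+1}_{n,m}(Q_{n,m})=\mathbb E^{\hat\mu}[g_{n,m}(Q_{n,m},\mathbf u)]+\sum_{Q'_{n,m}}\mathbb E^{\hat\mu}[\Pr[Q'_{n,m}\mid Q_{n,m},\mathbf u]]\hat V^l_{n,m}(Q'_{n,m})$, and $\hat V^{l+1}_{n,m}(Q_{n,m})=\hat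 J^{l+1}_{n,m}(Q_{n,m})-\hat J^{l+1}_{n,m}(Q^\dagger_{n,m})$. It is assumed that $\hat V^l_{n,m}\to\hat V_{n,m}$ pointwise; $\hat V_{n,m}$ then solves the per-BS-content fixed-point equation $\hat\theta_{n,m}+\hat V_{n,m}(Q_{n,m})=\mathbb E^{\hat\mu}[g_{n,m}(Q_{n,m},\mathbf u)]+\sum_{Q'_{n,m}}\mathbb E^{\hat\mu}[\Pr[Q'_{n,m}\mid Q_{n,m},\mathbf u]]\hat V_{n,m}(Q'_{n,m})$. Further notation. $\hat J(\mathbf Q,\mathbf u)=g(\mathbf Q,\mathbf u)+\sum_{n\in\mathcal N}\sum_{m\in\mathcal M_n}\mathbb E[\hat V_{n,m}(Q'_{n,m})]$ where $\mathbf Q'$ is the next state from $(\mathbf Q,\mathbf u)$; $\hat\Delta_{\mathbf u,\mathbf v}(\mathbf Q)=\hat J(\mathbf Q,\mathbf u)-\hat J(\mathbf Q,\mathbf v)$. For $(n,m)$ with $m\in\mathcal M_n$, $\mathbf Q_{-n,-m}=(Q_{i,j})_{(i,j)\neq(n,m)}$. Define $\hat\Phi_{\mathbf u}(\mathbf Q_{-n,-m})=\{Q_{n,m}\in\mathcal Q_{n,m}:\hat\Delta_{\mathbf u,\mathbf v}(Q_{n,m},\mathbf Q_{-n,-m})\le0\ \forall\mathbf v\in\mathcal U,\ \mathbf v\neq\mathbf u\}$, $\hat\phi^+_{\mathbf u}(\mathbf Q_{-n,-m})=\max\hat\Phi_{\mathbf u}(\mathbf Q_{-n,-m})$ if nonempty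 and $-\infty$ otherwise, $\hat\phi^-_{\mathbf u}(\mathbf Q_{-n,-m})=\min\hat\Phi_{\mathbf u}(\mathbf Q_{-n,-m})$ if nonempty and $+\infty$ otherwise. *)

theory Defs
  imports "HOL-Probability.Probability"
begin

(* Parameters used throughout:
   N     : number of SBSs (BSs are 0..N, 0 = MBS)
   M     : number of contents (contents are 1..M)
   C     : C n = set of contents cached at BS n  (C 0 = {1..M})
   Cap   : Cap n m = buffer size N_{n,m}
   arr   : arr n m = distribution of A_{n,m} (n in 0..N, m in 1..M)
   pw    : pw n m = power p(n,m), with pw n 0 = 0
   w     : weight
   V     : the per-BS-content value functions \<hat>V_{n,m}
   mu    : the randomized base policy (a pmf on actions)
   Qd    : the reference states Q^dagger_{n,m}                        *)

definition idx :: "nat \<Rightarrow> (nat \<Rightarrow> nat set) \<Rightarrow> (nat \<times> nat) set" where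
  "idx N C = {(n, m). n \<le> N \<and> m \<in> C n}"

definition Nm :: "nat \<Rightarrow> (nat \<Rightarrow> nat set) \<Rightarrow> nat \<Rightarrow> nat set" where
  "Nm N C m = {n \<in> {1..N}. m \<in> C n}"

definition actions :: "nat \<Rightarrow> (nat \<Rightarrow> nat set) \<Rightarrow> (nat \<Rightarrow> nat) set" where
  "actions N C = {u. (\<forall>n\<le>N. u n \<in> insert 0 (C n)) \<and> (\<forall>n>N. u n = 0)
                      \<and> u 0 * (\<Sum>n\<in>{1..N}. u n) = 0}"

definition states :: "nat \<Rightarrow> (nat \<Rightarrow> nat set) \<Rightarrow> (nat \<Rightarrow> nat \<Rightarrow> nat) \<Rightarrow> (nat \<times> nat \<Rightarrow> nat) set" where
  "states N C Cap = {Q. (\<forall>(n, m)\<in>idx N C. Q (n, m) \<le> Cap n m) \<and> (\<forall>x. x \<notin> idx N C \<longrightarrow> Q x = 0)}"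

definition arrivals :: "nat \<Rightarrow> nat \<Rightarrow> (nat \<Rightarrow> nat \<Rightarrow> nat pmf) \<Rightarrow> (nat \<times> nat \<Rightarrow> nat) pmf" where
  "arrivals N M arr = Pi_pmf ({..N} \<times> {1..M}) 0 (\<lambda>(n, m). arr n m)"

definition comp_next :: "nat \<Rightarrow> (nat \<Rightarrow> nat set) \<Rightarrow> (nat \<Rightarrow> nat \<Rightarrow> nat) \<Rightarrow> nat \<Rightarrow> nat \<Rightarrow> nat
      \<Rightarrow> (nat \<Rightarrow> nat) \<Rightarrow> (nat \<times> nat \<Rightarrow> nat) \<Rightarrow> nat" where
  "comp_next N C Cap n m q u A =
     (if n = 0 then
        min ((if u 0 \<noteq> m then q else 0) + (A (0, m) + (\<Sum>i\<in>{1..N} - Nm N C m. A (i, m)))) (Cap 0 m)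
      else
        min ((if u 0 \<noteq> m \<and> u n \<noteq> m then q else 0) + A (n, m)) (Cap n m))"

definition next_state :: "nat \<Rightarrow> (nat \<Rightarrow> nat set) \<Rightarrow> (nat \<Rightarrow> nat \<Rightarrow> nat)
      \<Rightarrow> (nat \<times> nat \<Rightarrow> nat) \<Rightarrow> (nat \<Rightarrow> nat) \<Rightarrow> (nat \<times> nat \<Rightarrow> nat) \<Rightarrow> (nat \<times> nat \<Rightarrow> nat)" where
  "next_state N C Cap Q u A =
     (\<lambda>(n, m). if (n, m) \<in> idx N C then comp_next N C Cap n m (Q (n, m)) u A else 0)"

definition delay :: "nat \<Rightarrow> (nat \<Rightarrow> nat set) \<Rightarrow> (nat \<times> nat \<Rightarrow> nat) \<Rightarrow> real" where
  "delay N C Q = (\<Sum>(n, m)\<in>idx N C. real (Q (n, m)))"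

definition power :: "nat \<Rightarrow> (nat \<Rightarrow> nat \<Rightarrow> real) \<Rightarrow> (nat \<Rightarrow> nat) \<Rightarrow> real" where
  "power N pw u = (\<Sum>n\<in>{..N}. pw n (u n))"

definition g_comp :: "(nat \<Rightarrow> nat \<Rightarrow> real) \<Rightarrow> real \<Rightarrow> nat \<Rightarrow> nat \<Rightarrow> nat \<Rightarrow> (nat \<Rightarrow> nat) \<Rightarrow> real" where
  "g_comp pw w n m q u = real q + w * (if u n = m then pw n m else 0)"

definition trans_prob :: "nat \<Rightarrow> nat \<Rightarrow> (nat \<Rightarrow> nat set) \<Rightarrow> (nat \<Rightarrow> nat \<Rightarrow> nat) \<Rightarrow> (nat \<Rightarrow> nat \<Rightarrow> nat pmf)
      \<Rightarrow> nat \<Rightarrow> nat \<Rightarrow> nat \<Rightarrow> (nat \<Rightarrow> nat) \<Rightarrow> nat \<Rightarrow> real" where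
  "trans_prob N M C Cap arr n m q u q' =
     measure_pmf.prob (arrivals N M arr) {A. comp_next N C Cap n m q u A = q'}"

definition J_step :: "nat \<Rightarrow> nat \<Rightarrow> (nat \<Rightarrow> nat set) \<Rightarrow> (nat \<Rightarrow> nat \<Rightarrow> nat) \<Rightarrow> (nat \<Rightarrow> nat \<Rightarrow> nat pmf)
      \<Rightarrow> (nat \<Rightarrow> nat \<Rightarrow> real) \<Rightarrow> real \<Rightarrow> (nat \<Rightarrow> nat) pmf
      \<Rightarrow> (nat \<Rightarrow> nat \<Rightarrow> nat \<Rightarrow> real) \<Rightarrow> nat \<Rightarrow> nat \<Rightarrow> nat \<Rightarrow> real" where
  "J_step N M C Cap arr pw w mu Vprev n m q =
     measure_pmf.expectation mu (\<lambda>u. g_comp pw w n m q u)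
     + (\<Sum>q'\<in>{0..Cap n m}.
          measure_pmf.expectation mu (\<lambda>u. trans_prob N M C Cap arr n m q u q') * Vprev n m q')"

primrec V_iter :: "nat \<Rightarrow> nat \<Rightarrow> (nat \<Rightarrow> nat set) \<Rightarrow> (nat \<Rightarrow> nat \<Rightarrow> nat) \<Rightarrow> (nat \<Rightarrow> nat \<Rightarrow> nat pmf)
      \<Rightarrow> (nat \<Rightarrow> nat \<Rightarrow> real) \<Rightarrow> real \<Rightarrow> (nat \<Rightarrow> nat) pmf \<Rightarrow> (nat \<Rightarrow> nat \<Rightarrow> nat)
      \<Rightarrow> nat \<Rightarrow> nat \<Rightarrow> nat \<Rightarrow> nat \<Rightarrow> real" where
  "V_iter N M C Cap arr pw w mu Qd 0 n m q = 0"
| "V_iter N M C Cap arr pw w mu Qd (Suc l) n m q =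
     J_step N M C Cap arr pw w mu (V_iter N M C Cap arr pw w mu Qd l) n m q
     - J_step N M C Cap arr pw w mu (V_iter N M C Cap arr pw w mu Qd l) n m (Qd n m)"

definition Jhat :: "nat \<Rightarrow> nat \<Rightarrow> (nat \<Rightarrow> nat set) \<Rightarrow> (nat \<Rightarrow> nat \<Rightarrow> nat) \<Rightarrow> (nat \<Rightarrow> nat \<Rightarrow> nat pmf)
      \<Rightarrow> (nat \<Rightarrow> nat \<Rightarrow> real) \<Rightarrow> real \<Rightarrow> (nat \<Rightarrow> nat \<Rightarrow> nat \<Rightarrow> real)
      \<Rightarrow> (nat \<times> nat \<Rightarrow> nat) \<Rightarrow> (nat \<Rightarrow> nat) \<Rightarrow> real" where
  "Jhat N M C Cap arr pw w V Q u =
     delay N C Q + w * power N pw u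
     + (\<Sum>(n, m)\<in>idx N C.
          measure_pmf.expectation (arrivals N M arr) (\<lambda>A. V n m (next_state N C Cap Q u A (n, m))))"

definition Delta :: "nat \<Rightarrow> nat \<Rightarrow> (nat \<Rightarrow> nat set) \<Rightarrow> (nat \<Rightarrow> nat \<Rightarrow> nat) \<Rightarrow> (nat \<Rightarrow> nat \<Rightarrow> nat pmf)
      \<Rightarrow> (nat \<Rightarrow> nat \<Rightarrow> real) \<Rightarrow> real \<Rightarrow> (nat \<Rightarrow> nat \<Rightarrow> nat \<Rightarrow> real)
      \<Rightarrow> (nat \<Rightarrow> nat) \<Rightarrow> (nat \<Rightarrow> nat) \<Rightarrow> (nat \<times> nat \<Rightarrow> nat) \<Rightarrow> real" where
  "Delta N M C Cap arr pw w V u v Q = Jhat N M C Cap arr pw w V Q u - Jhat N M C Cap arr pw w V Q v"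

(* \<hat>\<Phi>_u(Q_{-n,-m}): only the components of Q other than (n,m) matter *)
definition Phi :: "nat \<Rightarrow> nat \<Rightarrow> (nat \<Rightarrow> nat set) \<Rightarrow> (nat \<Rightarrow> nat \<Rightarrow> nat) \<Rightarrow> (nat \<Rightarrow> nat \<Rightarrow> nat pmf)
      \<Rightarrow> (nat \<Rightarrow> nat \<Rightarrow> real) \<Rightarrow> real \<Rightarrow> (nat \<Rightarrow> nat \<Rightarrow> nat \<Rightarrow> real)
      \<Rightarrow> (nat \<Rightarrow> nat) \<Rightarrow> nat \<Rightarrow> nat \<Rightarrow> (nat \<times> nat \<Rightarrow> nat) \<Rightarrow> nat set" where
  "Phi N M C Cap arr pw w V u n m Q =
     {q \<in> {0..Cap n m}. \<forall>v\<in>actions N C. v \<noteq> u \<longrightarrow>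
        Delta N M C Cap arr pw w V u v (Q((n, m) := q)) \<le> 0}"

definition phi_plus :: "nat \<Rightarrow> nat \<Rightarrow> (nat \<Rightarrow> nat set) \<Rightarrow> (nat \<Rightarrow> nat \<Rightarrow> nat) \<Rightarrow> (nat \<Rightarrow> nat \<Rightarrow> nat pmf)
      \<Rightarrow> (nat \<Rightarrow> nat \<Rightarrow> real) \<Rightarrow> real \<Rightarrow> (nat \<Rightarrow> nat \<Rightarrow> nat \<Rightarrow> real)
      \<Rightarrow> (nat \<Rightarrow> nat) \<Rightarrow> nat \<Rightarrow> nat \<Rightarrow> (nat \<times> nat \<Rightarrow> nat) \<Rightarrow> ereal" where
  "phi_plus N M C Cap arr pw w V u n m Q =
     (let S = Phi N M C Cap arr pw w V u n m Q in if S = {} then -\<infinity> else ereal (real (Max S)))"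

definition phi_minus :: "nat \<Rightarrow> nat \<Rightarrow> (nat \<Rightarrow> nat set) \<Rightarrow> (nat \<Rightarrow> nat \<Rightarrow> nat) \<Rightarrow> (nat \<Rightarrow> nat \<Rightarrow> nat pmf)
      \<Rightarrow> (nat \<Rightarrow> nat \<Rightarrow> real) \<Rightarrow> real \<Rightarrow> (nat \<Rightarrow> nat \<Rightarrow> nat \<Rightarrow> real)
      \<Rightarrow> (nat \<Rightarrow> nat) \<Rightarrow> nat \<Rightarrow> nat \<Rightarrow> (nat \<times> nat \<Rightarrow> nat) \<Rightarrow> ereal" where
  "phi_minus N M C Cap arr pw w V u n m Q =
     (let S = Phi N M C Cap arr pw w V u n m Q in if S = {} then \<infinity> else ereal (real (Min S)))"

end

theory Submission
  imports Defs
begin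

text \<open>
  Everything rests on the monotonicity of the per-BS-content value functions \<open>V n m\<close>, which
  relative value iteration preserves because the queue update is monotone in the current
  queue length. Varying only the component \<open>Q (n, m)\<close> of the state changes \<open>Jhat Q u\<close> by the
  same delay term for every action, plus the expected value of the next \<open>(n, m)\<close> queue.
  That expectation does not depend on \<open>Q (n, m)\<close> if \<open>u\<close> serves content \<open>m\<close> at BS \<open>n\<close> or at the
  MBS (the queue is emptied), and it is the same for all actions that do not. Hence
  \<open>Delta u v\<close> is non-increasing in \<open>Q (n, m)\<close> when \<open>u\<close> empties that queue and non-decreasing
  otherwise, so optimality of \<open>u\<close> propagates upwards from \<open>phi_minus\<close>, respectively downwards
  from \<open>phi_plus\<close>, and the optimality region of an action that empties \<open>(n, m)\<close> grows with
  \<open>Q (n, m)\<close>.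
\<close>

lemma idx_subset:
  assumes "C 0 = {1..M}" "\<forall>n\<in>{1..N}. C n \<subseteq> {1..M}"
  shows "idx N C \<subseteq> {..N} \<times> {1..M}"
proof -
  have "C n \<subseteq> {1..M}" if "n \<le> N" for n
    using assms that by (cases "n = 0") auto
  then show ?thesis
    by (auto simp: idx_def)
qed

lemma actions_eq_if_idx_empty:
  assumes "idx N C = {}"
  shows "actions N C = {\<lambda>_. 0}"
proof -
  have "u n = 0" if u: "u \<in> actions N C" for u n
  proof (cases "n \<le> N")
    case True
    then have "u n \<in> insert 0 (C n)" and "C n = {}"
      using u assms by (auto simp: actions_def idx_def)
    then show ?thesis by simp
  next
    case False
    then show ?thesis using u by (simp add: actions_def)
  qed
  moreover have "(\<lambda>_. 0) \<in> actions N C"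
    by (simp add: actions_def)
  ultimately show ?thesis
    by blast
qed

lemma integrable_comp_bounded_nat:
  fixes X :: "'a \<Rightarrow> nat" and f :: "nat \<Rightarrow> real"
  assumes "\<And>x. X x \<le> K"
  shows "integrable (measure_pmf p) (\<lambda>x. f (X x))"
proof (rule measure_pmf.integrable_const_bound[where B = "\<Sum>k\<in>{0..K}. \<bar>f k\<bar>"])
  show "AE x in measure_pmf p. norm (f (X x)) \<le> (\<Sum>k\<in>{0..K}. \<bar>f k\<bar>)"
    using assms by (auto intro!: member_le_sum)
qed simp

lemma expectation_bounded_nat_eq_sum:
  fixes X :: "'a \<Rightarrow> nat" and f :: "nat \<Rightarrow> real"
  assumes "\<And>x. X x \<le> K"
  shows "measure_pmf.expectation p (\<lambda>x. f (X x))
       = (\<Sum>k\<in>{0..K}. measure_pmf.prob p {x. X x = k} * f k)"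
proof -
  have "measure_pmf.expectation p (\<lambda>x. f (X x)) = measure_pmf.expectation (map_pmf X p) f"
    by simp
  also have "\<dots> = (\<Sum>k\<in>{0..K}. f k * pmf (map_pmf X p) k)"
    by (rule integral_measure_pmf_real) (use assms in auto)
  also have "\<dots> = (\<Sum>k\<in>{0..K}. measure_pmf.prob p {x. X x = k} * f k)"
    by (simp add: pmf_map vimage_def mult.commute)
  finally show ?thesis .
qed

lemma expectation_bounded_nat_mono:
  fixes X Y :: "'a \<Rightarrow> nat" and f :: "nat \<Rightarrow> real"
  assumes "\<And>x. X x \<le> Y x" "\<And>x. Y x \<le> K" "mono_on {0..K} f"
  shows "measure_pmf.expectation p (\<lambda>x. f (X x)) \<le> measure_pmf.expectation p (\<lambda>x. f (Y x))"
proof (rule integral_mono)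
  show "integrable (measure_pmf p) (\<lambda>x. f (X x))"
    using assms(1,2) by (intro integrable_comp_bounded_nat) (rule order_trans)
  show "integrable (measure_pmf p) (\<lambda>x. f (Y x))"
    using assms(2) by (rule integrable_comp_bounded_nat)
  show "f (X x) \<le> f (Y x)" for x
    using assms by (intro mono_onD[OF assms(3)]) (auto intro: order_trans)
qed

subsection \<open>Monotonicity of the value functions\<close>

lemma comp_next_le_Cap: "comp_next N C Cap n m q u A \<le> Cap n m"
  by (simp add: comp_next_def)

lemma comp_next_mono: "q1 \<le> q2 \<Longrightarrow> comp_next N C Cap n m q1 u A \<le> comp_next N C Cap n m q2 u A"
  by (auto simp: comp_next_def min_def)

lemma sum_trans_prob_eq_expectation:
  "(\<Sum>q'\<in>{0..Cap n m}. trans_prob N M C Cap arr n m q u q' * f q')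
   = measure_pmf.expectation (arrivals N M arr) (\<lambda>A. f (comp_next N C Cap n m q u A))"
  unfolding trans_prob_def
  by (rule expectation_bounded_nat_eq_sum[symmetric]) (rule comp_next_le_Cap)

lemma J_step_mono:
  assumes "mono_on {0..Cap n m} (Vprev n m)" and "q1 \<le> q2"
  shows "J_step N M C Cap arr pw w mu Vprev n m q1 \<le> J_step N M C Cap arr pw w mu Vprev n m q2"
proof -
  let ?next = "\<lambda>q u. \<Sum>q'\<in>{0..Cap n m}. trans_prob N M C Cap arr n m q u q' * Vprev n m q'"
  have int_trans: "integrable (measure_pmf mu) (\<lambda>u. trans_prob N M C Cap arr n m q u q')" for q q'
    by (rule measure_pmf.integrable_const_bound[where B = 1]) (auto simp: trans_prob_def)
  have int_next: "integrable (measure_pmf mu) (\<lambda>u. ?next q u)" for q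
    by (auto intro!: integrable_mult_left int_trans)
  have int_cost: "integrable (measure_pmf mu) (\<lambda>u. g_comp pw w n m q u)" for q
    by (rule measure_pmf.integrable_const_bound[where B = "real q + \<bar>w * pw n m\<bar>"])
       (auto simp: g_comp_def)
  have J_step_eq: "J_step N M C Cap arr pw w mu Vprev n m q
      = measure_pmf.expectation mu (\<lambda>u. g_comp pw w n m q u)
        + measure_pmf.expectation mu (\<lambda>u. ?next q u)" for q
    unfolding J_step_def
    by (subst Bochner_Integration.integral_sum) (auto intro!: integrable_mult_left int_trans)
  have "measure_pmf.expectation mu (\<lambda>u. g_comp pw w n m q1 u)
      \<le> measure_pmf.expectation mu (\<lambda>u. g_comp pw w n m q2 u)"
    by (rule integral_mono[OF int_cost int_cost]) (use assms(2) in \<open>auto simp: g_comp_def\<close>)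
  moreover have "measure_pmf.expectation mu (\<lambda>u. ?next q1 u)
      \<le> measure_pmf.expectation mu (\<lambda>u. ?next q2 u)"
  proof (rule integral_mono[OF int_next int_next])
    show "?next q1 u \<le> ?next q2 u" for u
      unfolding sum_trans_prob_eq_expectation
      by (rule expectation_bounded_nat_mono) (use assms comp_next_mono comp_next_le_Cap in auto)
  qed
  ultimately show ?thesis
    unfolding J_step_eq by linarith
qed

lemma V_iter_mono: "mono_on {0..Cap n m} (V_iter N M C Cap arr pw w mu Qd l n m)"
proof (induction l)
  case 0
  show ?case by (simp add: mono_on_def)
next
  case (Suc l)
  then show ?case
    by (auto intro!: mono_onI J_step_mono)
qed

lemma V_mono_if_V_iter_converges:
  assumes "\<forall>q\<le>Cap n m. (\<lambda>l. V_iter N M C Cap arr pw w mu Qd l n m q) \<longlonglongrightarrow> V n m q"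
  shows "mono_on {0..Cap n m} (V n m)"
proof (rule mono_onI)
  fix q1 q2 assume q: "q1 \<in> {0..Cap n m}" "q2 \<in> {0..Cap n m}" "q1 \<le> q2"
  show "V n m q1 \<le> V n m q2"
  proof (rule LIMSEQ_le)
    show "(\<lambda>l. V_iter N M C Cap arr pw w mu Qd l n m q1) \<longlonglongrightarrow> V n m q1"
      "(\<lambda>l. V_iter N M C Cap arr pw w mu Qd l n m q2) \<longlonglongrightarrow> V n m q2"
      using assms q by auto
    show "\<exists>L. \<forall>l\<ge>L. V_iter N M C Cap arr pw w mu Qd l n m q1 \<le> V_iter N M C Cap arr pw w mu Qd l n m q2"
      using q by (meson V_iter_mono mono_onD)
  qed
qed

subsection \<open>Dependence of \<open>Delta\<close> on a single queue\<close>

lemma sum_fun_upd_remove: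
  assumes "finite A" "x \<in> A"
  shows "(\<Sum>y\<in>A. f y ((Q(x := q)) y)) = f x q + (\<Sum>y\<in>A - {x}. f y (Q y))"
  using assms by (simp add: sum.remove)

definition empties_queue :: "(nat \<Rightarrow> nat) \<Rightarrow> nat \<Rightarrow> nat \<Rightarrow> bool" where
  "empties_queue u n m \<longleftrightarrow> u 0 = m \<or> (n \<noteq> 0 \<and> u n = m)"

definition exp_next_value :: "nat \<Rightarrow> nat \<Rightarrow> (nat \<Rightarrow> nat set) \<Rightarrow> (nat \<Rightarrow> nat \<Rightarrow> nat)
      \<Rightarrow> (nat \<Rightarrow> nat \<Rightarrow> nat pmf) \<Rightarrow> (nat \<Rightarrow> nat \<Rightarrow> nat \<Rightarrow> real)
      \<Rightarrow> nat \<Rightarrow> nat \<Rightarrow> nat \<Rightarrow> (nat \<Rightarrow> nat) \<Rightarrow> real" where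
  "exp_next_value N M C Cap arr V n m q u =
     measure_pmf.expectation (arrivals N M arr) (\<lambda>A. V n m (comp_next N C Cap n m q u A))"

locale caching_model =
  fixes N M :: nat and C :: "nat \<Rightarrow> nat set" and Cap :: "nat \<Rightarrow> nat \<Rightarrow> nat"
    and arr :: "nat \<Rightarrow> nat \<Rightarrow> nat pmf" and pw :: "nat \<Rightarrow> nat \<Rightarrow> real" and w :: real
    and V :: "nat \<Rightarrow> nat \<Rightarrow> nat \<Rightarrow> real"
  assumes finite_idx: "finite (idx N C)"
    and V_mono: "\<And>n m. (n, m) \<in> idx N C \<Longrightarrow> mono_on {0..Cap n m} (V n m)"
begin

abbreviation "EV \<equiv> exp_next_value N M C Cap arr V"
abbreviation "J \<equiv> Jhat N M C Cap arr pw w V"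
abbreviation "D \<equiv> Delta N M C Cap arr pw w V"

lemma exp_next_value_if_empties_queue:
  "empties_queue u n m \<Longrightarrow> EV n m q u = EV n m q' u"
  unfolding exp_next_value_def empties_queue_def by (auto simp: comp_next_def)

lemma exp_next_value_if_not_empties_queue:
  "\<not> empties_queue u n m \<Longrightarrow> \<not> empties_queue v n m \<Longrightarrow> EV n m q u = EV n m q v"
  unfolding exp_next_value_def empties_queue_def by (auto simp: comp_next_def)

lemma exp_next_value_mono:
  "(n, m) \<in> idx N C \<Longrightarrow> q1 \<le> q2 \<Longrightarrow> EV n m q1 u \<le> EV n m q2 u"
  unfolding exp_next_value_def
  by (rule expectation_bounded_nat_mono) (auto intro: comp_next_mono comp_next_le_Cap V_mono)

lemma Jhat_fun_upd:
  assumes "(n, m) \<in> idx N C"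
  shows "J (Q((n, m) := q)) u
     = real q + EV n m q u + w * power N pw u
       + (\<Sum>(i, j)\<in>idx N C - {(n, m)}. real (Q (i, j)) + EV i j (Q (i, j)) u)"
proof -
  have "delay N C (Q((n, m) := q)) = real q + (\<Sum>(i, j)\<in>idx N C - {(n, m)}. real (Q (i, j)))"
    unfolding delay_def using sum_fun_upd_remove[OF finite_idx assms, of "\<lambda>(i, j) v. real v" Q q]
    by (simp only: split_def prod.collapse fst_conv snd_conv)
  moreover have "(\<Sum>(i, j)\<in>idx N C. measure_pmf.expectation (arrivals N M arr)
                   (\<lambda>A. V i j (next_state N C Cap (Q((n, m) := q)) u A (i, j))))
       = (\<Sum>(i, j)\<in>idx N C. EV i j ((Q((n, m) := q)) (i, j)) u)"
    by (rule sum.cong) (auto simp: next_state_def exp_next_value_def)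
  moreover have "\<dots> = EV n m q u + (\<Sum>(i, j)\<in>idx N C - {(n, m)}. EV i j (Q (i, j)) u)"
    using sum_fun_upd_remove[OF finite_idx assms, of "\<lambda>(i, j) v. EV i j v u" Q q]
    by (simp only: split_def prod.collapse fst_conv snd_conv)
  ultimately show ?thesis
    unfolding Jhat_def by (simp add: sum.distrib case_prod_beta)
qed

lemma Delta_fun_upd_diff:
  assumes "(n, m) \<in> idx N C"
  shows "D u v (Q((n, m) := q2)) - D u v (Q((n, m) := q1))
       = (EV n m q2 u - EV n m q1 u) - (EV n m q2 v - EV n m q1 v)"
  unfolding Delta_def Jhat_fun_upd[OF assms] by simp

lemma Delta_antimono_if_empties_queue:
  assumes "(n, m) \<in> idx N C" and "empties_queue u n m" "q1 \<le> q2"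
  shows "D u v (Q((n, m) := q2)) \<le> D u v (Q((n, m) := q1))"
  using Delta_fun_upd_diff[OF assms(1), of u v Q q2 q1]
    exp_next_value_if_empties_queue[OF assms(2), of q2 q1]
    exp_next_value_mono[OF assms(1,3), of v]
  by linarith

lemma Delta_mono_if_not_empties_queue:
  assumes "(n, m) \<in> idx N C" and "\<not> empties_queue u n m" "q1 \<le> q2"
  shows "D u v (Q((n, m) := q1)) \<le> D u v (Q((n, m) := q2))"
proof (cases "empties_queue v n m")
  case True
  then show ?thesis
    using Delta_fun_upd_diff[OF assms(1), of u v Q q2 q1]
      exp_next_value_if_empties_queue[OF True, of q2 q1]
      exp_next_value_mono[OF assms(1,3), of u]
    by linarith
next
  case False
  then show ?thesis
    using Delta_fun_upd_diff[OF assms(1), of u v Q q2 q1]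
      exp_next_value_if_not_empties_queue[OF assms(2) False, of q1]
      exp_next_value_if_not_empties_queue[OF assms(2) False, of q2]
    by linarith
qed

subsection \<open>Optimality thresholds\<close>

lemma is_arg_min_Jhat_if_Delta_nonpos:
  "u \<in> actions N C \<Longrightarrow> \<forall>v\<in>actions N C. D u v Q \<le> 0
   \<Longrightarrow> is_arg_min (J Q) (\<lambda>v. v \<in> actions N C) u"
  unfolding is_arg_min_def Delta_def by force

lemma Delta_nonpos_if_le_phi_plus:
  assumes "(n, m) \<in> idx N C" and "\<not> empties_queue u n m" "ereal (real (Q (n, m))) \<le> phi_plus N M C Cap arr pw w V u n m Q"
    and "v \<in> actions N C"
  shows "D u v Q \<le> 0"
proof (cases "v = u")
  case False
  let ?S = "Phi N M C Cap arr pw w V u n m Q"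
  have "?S \<noteq> {}" and le_Max: "Q (n, m) \<le> Max ?S"
    using assms(3) unfolding phi_plus_def Let_def by (auto split: if_splits)
  then have "Max ?S \<in> ?S"
    by (intro Max_in) (simp_all add: Phi_def)
  have "D u v (Q((n, m) := Q (n, m))) \<le> D u v (Q((n, m) := Max ?S))"
    using Delta_mono_if_not_empties_queue[OF assms(1,2) le_Max] .
  also have "\<dots> \<le> 0"
    using \<open>Max ?S \<in> ?S\<close> assms(4) False unfolding Phi_def by auto
  finally show ?thesis by simp
qed (simp add: Delta_def)

lemma Delta_nonpos_if_all_le_phi_plus:
  assumes "u \<in> actions N C" "\<forall>(n, m)\<in>idx N C. \<not> empties_queue u n m"
    and "\<forall>(n, m)\<in>idx N C. ereal (real (Q (n, m))) \<le> phi_plus N M C Cap arr pw w V u n m Q"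
  shows "\<forall>v\<in>actions N C. D u v Q \<le> 0"
proof (cases "idx N C = {}")
  case True
  then show ?thesis
    using assms(1) by (simp add: actions_eq_if_idx_empty Delta_def)
next
  case False
  then obtain n m where "(n, m) \<in> idx N C" by auto
  with assms(2,3) show ?thesis
    by (blast intro: Delta_nonpos_if_le_phi_plus)
qed

lemma Delta_nonpos_if_phi_minus_le:
  assumes "(n, m) \<in> idx N C" and "empties_queue u n m" "phi_minus N M C Cap arr pw w V u n m Q \<le> ereal (real (Q (n, m)))"
    and "v \<in> actions N C"
  shows "D u v Q \<le> 0"
proof (cases "v = u")
  case False
  let ?S = "Phi N M C Cap arr pw w V u n m Q"
  have "?S \<noteq> {}" and Min_le: "Min ?S \<le> Q (n, m)"
    using assms(3) unfolding phi_minus_def Let_def by (auto split: if_splits)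
  then have "Min ?S \<in> ?S"
    by (intro Min_in) (simp_all add: Phi_def)
  have "D u v (Q((n, m) := Q (n, m))) \<le> D u v (Q((n, m) := Min ?S))"
    using Delta_antimono_if_empties_queue[OF assms(1,2) Min_le] .
  also have "\<dots> \<le> 0"
    using \<open>Min ?S \<in> ?S\<close> assms(4) False unfolding Phi_def by auto
  finally show ?thesis by simp
qed (simp add: Delta_def)

lemma phi_minus_antimono_if_empties_queue:
  assumes "(n, m) \<in> idx N C" and "empties_queue u n m" "(n', m') \<noteq> (n, m)" "q1 \<le> q2"
  shows "phi_minus N M C Cap arr pw w V u n' m' (Q((n, m) := q2))
       \<le> phi_minus N M C Cap arr pw w V u n' m' (Q((n, m) := q1))"
proof -
  let ?S = "\<lambda>q. Phi N M C Cap arr pw w V u n' m' (Q((n, m) := q))"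
  have twist: "Q((n, m) := x, (n', m') := q) = Q((n', m') := q, (n, m) := x)" for x q
    using assms(3) by (intro fun_upd_twist) auto
  have sub: "?S q1 \<subseteq> ?S q2"
  proof
    fix q assume q: "q \<in> ?S q1"
    have "D u v (Q((n, m) := q2, (n', m') := q)) \<le> 0" if "v \<in> actions N C" "v \<noteq> u" for v
    proof -
      have "D u v (Q((n, m) := q2, (n', m') := q)) \<le> D u v (Q((n, m) := q1, (n', m') := q))"
        unfolding twist by (rule Delta_antimono_if_empties_queue[OF assms(1,2,4)])
      also have "\<dots> \<le> 0"
        using q that unfolding Phi_def by auto
      finally show ?thesis .
    qed
    then show "q \<in> ?S q2"
      using q unfolding Phi_def by auto
  qed
  have fin: "finite (?S q)" for q
    by (simp add: Phi_def)
  show ?thesis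
  proof (cases "?S q1 = {}")
    case False
    with sub have "?S q2 \<noteq> {}" by auto
    with False show ?thesis
      using Min_antimono[OF sub False fin] by (simp add: phi_minus_def Let_def)
  qed (simp add: phi_minus_def)
qed

end

theorem theorem2:
  fixes N M :: nat
    and C :: "nat \<Rightarrow> nat set"
    and Cap :: "nat \<Rightarrow> nat \<Rightarrow> nat"
    and arr :: "nat \<Rightarrow> nat \<Rightarrow> nat pmf"
    and pw :: "nat \<Rightarrow> nat \<Rightarrow> real"
    and w :: real
    and mu :: "(nat \<Rightarrow> nat) pmf"
    and Qd :: "nat \<Rightarrow> nat \<Rightarrow> nat"
    and V :: "nat \<Rightarrow> nat \<Rightarrow> nat \<Rightarrow> real"
  assumes N_pos: "N \<ge> 1"
    and C0: "C 0 = {1..M}"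
    and C_sub: "\<forall>n\<in>{1..N}. C n \<subseteq> {1..M}"
    and Cap_pos: "\<forall>(n, m)\<in>idx N C. Cap n m > 0"
    and pw_nonneg: "\<forall>(n, m)\<in>idx N C. pw n m \<ge> 0"
    and pw_zero: "\<forall>n\<le>N. pw n 0 = 0"
    and w_nonneg: "w \<ge> 0"
    and mu_supp: "set_pmf mu \<subseteq> actions N C"
    and Qd_in: "\<forall>(n, m)\<in>idx N C. Qd n m \<le> Cap n m"
    and V_lim: "\<forall>(n, m)\<in>idx N C. \<forall>q\<le>Cap n m.
                  (\<lambda>l. V_iter N M C Cap arr pw w mu Qd l n m q) \<longlonglongrightarrow> V n m q"
  shows
    "(\<forall>Q\<in>states N C Cap.
        (\<forall>(n, m)\<in>idx N C. ereal (real (Q (n, m))) \<le> phi_plus N M C Cap arr pw w V (\<lambda>_. 0) n m Q)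
        \<longrightarrow> (\<forall>v\<in>actions N C. Delta N M C Cap arr pw w V (\<lambda>_. 0) v Q \<le> 0)
            \<and> is_arg_min (Jhat N M C Cap arr pw w V Q) (\<lambda>v. v \<in> actions N C) (\<lambda>_. 0))
     \<and> (\<forall>u\<in>actions N C. \<forall>n\<le>N. \<forall>m\<in>C n. u n = m \<longrightarrow>
          (\<forall>Q\<in>states N C Cap.
             phi_minus N M C Cap arr pw w V u n m Q \<le> ereal (real (Q (n, m)))
             \<longrightarrow> (\<forall>v\<in>actions N C. Delta N M C Cap arr pw w V u v Q \<le> 0)
                 \<and> is_arg_min (Jhat N M C Cap arr pw w V Q) (\<lambda>v. v \<in> actions N C) u))
     \<and> (\<forall>u\<in>actions N C. \<forall>m\<in>C 0. u 0 = m \<longrightarrow>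
          (\<forall>n\<in>Nm N C m. \<forall>Q\<in>states N C Cap. \<forall>q1 q2. q1 \<le> q2 \<longrightarrow> q2 \<le> Cap n m \<longrightarrow>
             phi_minus N M C Cap arr pw w V u 0 m (Q((n, m) := q2))
               \<le> phi_minus N M C Cap arr pw w V u 0 m (Q((n, m) := q1))))"
proof -
  have idx_sub: "idx N C \<subseteq> {..N} \<times> {1..M}"
    using C0 C_sub by (rule idx_subset)
  interpret caching_model N M C Cap arr pw w V
  proof
    show "finite (idx N C)"
      using idx_sub by (rule finite_subset) simp
    show "mono_on {0..Cap n m} (V n m)" if "(n, m) \<in> idx N C" for n m
      using V_lim that by (intro V_mono_if_V_iter_converges) auto
  qed
  have idle_action: "(\<lambda>_. 0) \<in> actions N C" "\<forall>(n, m)\<in>idx N C. \<not> empties_queue (\<lambda>_. 0) n m"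
    using idx_sub by (auto simp: actions_def empties_queue_def)
  have serving: "empties_queue u n m" if "u n = m" for u n m
    using that by (cases "n = 0") (simp_all add: empties_queue_def)
  have MBS_serving: "empties_queue u n m" if "u 0 = m" for u n m
    using that by (simp add: empties_queue_def)
  show ?thesis
    using is_arg_min_Jhat_if_Delta_nonpos
      Delta_nonpos_if_all_le_phi_plus[OF idle_action]
      Delta_nonpos_if_phi_minus_le[OF _ serving]
      phi_minus_antimono_if_empties_queue[OF _ MBS_serving]
    by (auto simp: idx_def Nm_def idle_action(1))
qed

end
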